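(* Let $(X,d)$ be a complete metric space and let $T:X\to X$ be a mapping for which there exists $\alpha\in[0,1)$ such that $$d(Tx,T^2x)+d(T^2x,Ty)+d(Ty,Tx)\le \alpha\,[\,d(x,Tx)+d(Tx,y)+d(y,x)\,]$$ for all $x,y\in X$ with $x\neq y$ and $y\neq Tx$ (i.e. $T$ is a generalized orbital triangular contraction). Suppose that $T$ has no periodic points of prime period $2$. Then $T$ has a unique fixed point.
   Context: A point $x\in X$ is a periodic point of period $n$ of $T$ if $T^n x=x$; the least positive integer $n$ with $T^nx=x$ is its prime period. Thus "no periodic points of prime period $2$" means there is no $x\in X$ with $T^2x=x$ and $Tx\neq x$. The condition "$x\neq y\neq Tx$" in the paper means $x\neq y$ and $y\neq Tx$. *)

theory Defs
  imports "HOL-Analysis.Analysis"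
begin

end

theory Submission
  imports Defs
begin

(* If T had no fixed point, then, as T has no points of prime period 2, the contraction
   condition applies to x = T z, y = z for every z and shows that the perimeter of the
   triangle z, T z, T (T z) shrinks by the factor \<alpha> under T. Consecutive orbit points
   therefore have geometrically decreasing distances, so every orbit is Cauchy and converges
   to some l. The orbit is injective, hence eventually avoids l, and the contraction
   condition applied to x = T^n z, y = l forces T^(n+2) z \<longrightarrow> T l, i.e. T l = l.
   Two distinct fixed points u, v would give 2 d(u,v) \<le> 2 \<alpha> d(u,v). *)

lemma dist_le_sum_dist_Suc:
  fixes f :: "nat \<Rightarrow> 'a::metric_space"
  assumes "m \<le> n"
  shows "dist (f m) (f n) \<le> (\<Sum>k\<in>{m..<n}. dist (f k) (f (Suc k)))"
  using assms
proof (induction n rule: dec_induct)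
  case base
  then show ?case by simp
next
  case (step n)
  have "dist (f m) (f (Suc n)) \<le> dist (f m) (f n) + dist (f n) (f (Suc n))"
    by (rule dist_triangle)
  also have "\<dots> \<le> (\<Sum>k\<in>{m..<Suc n}. dist (f k) (f (Suc k)))"
    using step by simp
  finally show ?case .
qed

lemma Cauchy_if_summable_dist_Suc:
  fixes f :: "nat \<Rightarrow> 'a::metric_space"
  assumes "summable (\<lambda>n. dist (f n) (f (Suc n)))"
  shows "Cauchy f"
proof (rule metric_CauchyI)
  fix e :: real
  assume "0 < e"
  then obtain N where N: "\<forall>m\<ge>N. \<forall>n. norm (\<Sum>k\<in>{m..<n}. dist (f k) (f (Suc k))) < e"
    using assms summable_Cauchy by blast
  have "dist (f m) (f n) < e" if "N \<le> m" "m \<le> n" for m n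
  proof -
    have "(\<Sum>k\<in>{m..<n}. dist (f k) (f (Suc k))) < e"
      using N \<open>N \<le> m\<close> by (simp add: sum_nonneg)
    then show ?thesis
      using dist_le_sum_dist_Suc[OF \<open>m \<le> n\<close>, of f] by linarith
  qed
  then show "\<exists>M. \<forall>m\<ge>M. \<forall>n\<ge>M. dist (f m) (f n) < e"
    by (metis dist_commute nat_le_linear)
qed

locale orbital_triangular_contraction =
  fixes T :: "'a::metric_space \<Rightarrow> 'a" and \<alpha> :: real
  assumes alpha_nonneg: "0 \<le> \<alpha>" and alpha_less_one: "\<alpha> < 1"
    and triangle_contraction: "\<And>x y. x \<noteq> y \<Longrightarrow> y \<noteq> T x \<Longrightarrow>
      dist (T x) (T (T x)) + dist (T (T x)) (T y) + dist (T y) (T x)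
        \<le> \<alpha> * (dist x (T x) + dist (T x) y + dist y x)"
begin

lemma fixed_point_unique:
  assumes "T u = u" and "T v = v"
  shows "u = v"
proof (rule ccontr)
  assume "u \<noteq> v"
  with assms have "2 * dist u v \<le> \<alpha> * (2 * dist u v)"
    using triangle_contraction[of u v] by (simp add: dist_commute)
  moreover have "\<alpha> * (2 * dist u v) < 2 * dist u v"
    using \<open>u \<noteq> v\<close> alpha_less_one by simp
  ultimately show False
    by linarith
qed

definition perimeter :: "'a \<Rightarrow> real" where
  "perimeter z = dist z (T z) + dist (T z) (T (T z)) + dist (T (T z)) z"

lemma perimeter_T_le:
  assumes "T z \<noteq> z" and "T (T z) \<noteq> z"
  shows "perimeter (T z) \<le> \<alpha> * perimeter z"
  using triangle_contraction[OF assms(1) assms(2)[symmetric]]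
  unfolding perimeter_def by (simp add: dist_commute algebra_simps)

lemma orbit_limit_is_fixed_point:
  assumes lim: "(\<lambda>n. (T ^^ n) x) \<longlonglongrightarrow> l"
    and avoids_limit: "\<forall>\<^sub>F n in sequentially. (T ^^ n) x \<noteq> l"
  shows "T l = l"
proof -
  define f where "f = (\<lambda>n. (T ^^ n) x)"
  have f_Suc: "f (Suc n) = T (f n)" for n
    by (simp add: f_def)
  have lim_f: "f \<longlonglongrightarrow> l"
    using lim by (simp add: f_def)
  then have lim_f_Suc: "(\<lambda>n. f (Suc n)) \<longlonglongrightarrow> l"
    by (rule LIMSEQ_Suc)
  define bound where "bound n = \<alpha> * (dist (f n) (f (Suc n)) + dist (f (Suc n)) l + dist l (f n))"
    for n
  have "bound \<longlonglongrightarrow> \<alpha> * (dist l l + dist l l + dist l l)"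
    unfolding bound_def by (intro tendsto_intros lim_f lim_f_Suc)
  then have bound_tendsto_0: "bound \<longlonglongrightarrow> 0"
    by simp
  have "\<forall>\<^sub>F n in sequentially. f n \<noteq> l"
    using avoids_limit by (simp add: f_def)
  then have "\<forall>\<^sub>F n in sequentially. f n \<noteq> l \<and> f (Suc n) \<noteq> l"
    using eventually_sequentially_Suc[of "\<lambda>n. f n \<noteq> l"] eventually_conj by auto
  then have "\<forall>\<^sub>F n in sequentially. norm (dist (f (Suc (Suc n))) (T l)) \<le> bound n"
  proof (rule eventually_mono)
    fix n
    assume "f n \<noteq> l \<and> f (Suc n) \<noteq> l"
    then have "f n \<noteq> l" and "l \<noteq> T (f n)"
      by (auto simp: f_Suc)
    from triangle_contraction[OF this]
    have "dist (T (T (f n))) (T l)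
        \<le> \<alpha> * (dist (f n) (T (f n)) + dist (T (f n)) l + dist l (f n))"
      using zero_le_dist[of "T (f n)" "T (T (f n))"] zero_le_dist[of "T l" "T (f n)"] by linarith
    then show "norm (dist (f (Suc (Suc n))) (T l)) \<le> bound n"
      by (simp add: bound_def f_Suc)
  qed
  then have "(\<lambda>n. dist (f (Suc (Suc n))) (T l)) \<longlonglongrightarrow> 0"
    using bound_tendsto_0 by (rule Lim_null_comparison)
  then have "(\<lambda>n. f (Suc (Suc n))) \<longlonglongrightarrow> T l"
    by (rule tendsto_dist_iff[THEN iffD2])
  moreover have "(\<lambda>n. f (Suc (Suc n))) \<longlonglongrightarrow> l"
    using lim_f_Suc by (rule LIMSEQ_Suc)
  ultimately show "T l = l"
    by (rule LIMSEQ_unique)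
qed

end

locale fixed_point_free_orbital_triangular_contraction = orbital_triangular_contraction +
  assumes no_fixed_point: "T z \<noteq> z" and no_period_two: "T (T z) \<noteq> z"
begin

lemma perimeter_pos: "0 < perimeter z"
proof -
  have "0 < dist z (T z)"
    using no_fixed_point[of z] by simp
  then show ?thesis
    unfolding perimeter_def by (simp add: add_pos_nonneg)
qed

lemma perimeter_funpow_le: "perimeter ((T ^^ k) z) \<le> \<alpha> ^ k * perimeter z"
proof (induction k)
  case 0
  then show ?case by simp
next
  case (Suc k)
  have "perimeter ((T ^^ Suc k) z) \<le> \<alpha> * perimeter ((T ^^ k) z)"
    using perimeter_T_le no_fixed_point no_period_two by simp
  also have "\<dots> \<le> \<alpha> * (\<alpha> ^ k * perimeter z)"
    using Suc alpha_nonneg by (rule mult_left_mono)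
  finally show ?case
    by simp
qed

lemma Cauchy_orbit: "Cauchy (\<lambda>n. (T ^^ n) x)"
proof (rule Cauchy_if_summable_dist_Suc)
  have bound: "dist ((T ^^ n) x) ((T ^^ Suc n) x) \<le> \<alpha> ^ n * perimeter x" for n
  proof -
    have "dist ((T ^^ n) x) ((T ^^ Suc n) x) \<le> perimeter ((T ^^ n) x)"
      unfolding perimeter_def by simp
    also have "\<dots> \<le> \<alpha> ^ n * perimeter x"
      by (rule perimeter_funpow_le)
    finally show ?thesis .
  qed
  have "summable (\<lambda>n. \<alpha> ^ n * perimeter x)"
    using alpha_nonneg alpha_less_one by (simp add: summable_mult2)
  then show "summable (\<lambda>n. dist ((T ^^ n) x) ((T ^^ Suc n) x))"
    by (rule summable_comparison_test') (use bound in simp)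
qed

lemma funpow_neq_self:
  assumes "0 < k"
  shows "(T ^^ k) z \<noteq> z"
proof
  assume "(T ^^ k) z = z"
  then have "perimeter z \<le> \<alpha> ^ k * perimeter z"
    using perimeter_funpow_le[of k z] by simp
  moreover have "\<alpha> ^ k < 1"
    using assms alpha_nonneg alpha_less_one by (simp add: power_less_one_iff)
  ultimately show False
    using perimeter_pos[of z] by simp
qed

lemma eventually_orbit_neq: "\<forall>\<^sub>F n in sequentially. (T ^^ n) x \<noteq> l"
proof (cases "\<exists>N. (T ^^ N) x = l")
  case True
  then obtain N where "(T ^^ N) x = l"
    by blast
  then have neq: "(T ^^ (k + N)) x \<noteq> l" if "0 < k" for k
    using funpow_neq_self[OF that, of l] by (simp add: funpow_add)
  show ?thesis
    unfolding eventually_sequentially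
  proof (intro exI allI impI)
    fix n
    assume "Suc N \<le> n"
    then show "(T ^^ n) x \<noteq> l"
      using neq[of "n - N"] by simp
  qed
qed simp

lemma orbit_not_convergent: "\<not> convergent (\<lambda>n. (T ^^ n) x)"
  using orbit_limit_is_fixed_point eventually_orbit_neq no_fixed_point
  unfolding convergent_def by blast

end

theorem theorem3p1:
  fixes T :: "'a::complete_space \<Rightarrow> 'a" and \<alpha> :: real
  assumes "0 \<le> \<alpha>" and "\<alpha> < 1"
    and "\<And>x y. x \<noteq> y \<Longrightarrow> y \<noteq> T x \<Longrightarrow>
           dist (T x) (T (T x)) + dist (T (T x)) (T y) + dist (T y) (T x)
             \<le> \<alpha> * (dist x (T x) + dist (T x) y + dist y x)"
    and "\<not> (\<exists>x. (T ^^ 2) x = x \<and> T x \<noteq> x)"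
  shows "\<exists>!x. T x = x"
proof -
  interpret orbital_triangular_contraction T \<alpha>
    using assms(1-3) by unfold_locales
  show ?thesis
  proof (rule ex_ex1I)
    show "\<exists>x. T x = x"
    proof (rule ccontr)
      assume "\<nexists>x. T x = x"
      with assms(4) interpret fixed_point_free_orbital_triangular_contraction T \<alpha>
        by unfold_locales (auto simp: numeral_2_eq_2)
      show False
        using Cauchy_orbit orbit_not_convergent Cauchy_convergent_iff by blast
    qed
  qed (rule fixed_point_unique)
qed

end
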